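(* Let $f:\mathbb{R}^n\to\mathbb{R}$ be differentiable with $\nabla f$ $L$-Lipschitz continuous, and let $\alpha_k$ be the quantities computed in Algorithm 3 (at iterations with $\nabla f(x^k)\ne0$), with $0\le\beta\le1$. Then for every $k$, $$\alpha_k\ge\alpha_{\min}:=\frac{(1-\beta)\left(1-\frac{L\overline{h}}{4}\right)+\beta(1-\nu)}{2+2\beta^2\nu^2}.$$
   Context: Algorithm 3: parameters $0<\mu<\nu<1$, $0<\underline{h}<1\le\gamma_0^0\le\overline{h}<\frac4L$, $0\le\beta\le1$, $\theta\in(0,1)$, $\tau>1$, $\eta\in(0,2)$, starting point $x^0$; run while $\nabla f(x^k)\neq0$. At iteration $k$: for $\gamma>0$ let $z^k(\gamma)=x^k-\gamma\nabla f(x^k)$ and $r_k(\gamma)=\gamma\|\nabla f(z^k(\gamma))-\nabla f(x^k)\|/\|z^k(\gamma)-x^k\|$; starting from $\gamma_0^k$, while $r_k(\gamma_l^k)>\nu$ set $\gamma_{l+1}^k=\gamma_l^k\theta\min\{1,1/r_k(\gamma_l^k)\}$; let $h_k$ be the first $\gamma_l^k$ with $r_k(\gamma_l^k)\le\nu$. Then $z^k=x^k-h_k\nabla f(x^k)$ and $x^{k+1}=x^k-\eta\alpha_kh_k\big(\nabla f(x^k)-\beta(\nabla f(x^k)-\nabla f(z^k))\big)$ with $$\alpha_k=\frac{(1-\beta)\left(1-\frac{Lh_k}{4}\right)\|x^k-z^k\|^2+\beta\langle x^k-z^k,h_k\nabla f(z^k)\rangle}{h_k^2\|\nabla f(x^k)-\beta(\nabla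 f(x^k)-\nabla f(z^k))\|^2};$$ finally $\gamma_0^{k+1}=\mathbf{P}_{[\underline{h},\overline{h}]}(\tau h_k)$ if $r_k(h_k)\le\mu$, else $\gamma_0^{k+1}=\mathbf{P}_{[\underline{h},\overline{h}]}(h_k)$, where $\mathbf{P}_{[a,b]}$ is projection onto $[a,b]$. *)

theory Defs
  imports "HOL-Analysis.Analysis"
begin

definition zpt :: "('a::real_normed_vector \<Rightarrow> 'a) \<Rightarrow> 'a \<Rightarrow> real \<Rightarrow> 'a" where
  "zpt g x \<gamma> = x - \<gamma> *\<^sub>R g x"

definition ratio :: "('a::real_normed_vector \<Rightarrow> 'a) \<Rightarrow> 'a \<Rightarrow> real \<Rightarrow> real" where
  "ratio g x \<gamma> = \<gamma> * norm (g (zpt g x \<gamma>) - g x) / norm (zpt g x \<gamma> - x)"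

primrec bt :: "('a::real_normed_vector \<Rightarrow> 'a) \<Rightarrow> real \<Rightarrow> 'a \<Rightarrow> real \<Rightarrow> nat \<Rightarrow> real" where
  "bt g \<theta> x \<gamma>0 0 = \<gamma>0"
| "bt g \<theta> x \<gamma>0 (Suc l) = bt g \<theta> x \<gamma>0 l * \<theta> * min 1 (1 / ratio g x (bt g \<theta> x \<gamma>0 l))"

definition step_h :: "('a::real_normed_vector \<Rightarrow> 'a) \<Rightarrow> real \<Rightarrow> real \<Rightarrow> 'a \<Rightarrow> real \<Rightarrow> real" where
  "step_h g \<nu> \<theta> x \<gamma>0 = bt g \<theta> x \<gamma>0 (LEAST l. ratio g x (bt g \<theta> x \<gamma>0 l) \<le> \<nu>)"

text \<open>alpha_k, given x = x^k, h = h_k and z = z^k = x^k - h_k grad f(x^k).\<close>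
definition alpha :: "('a::real_inner \<Rightarrow> 'a) \<Rightarrow> real \<Rightarrow> real \<Rightarrow> 'a \<Rightarrow> real \<Rightarrow> 'a \<Rightarrow> real" where
  "alpha g L \<beta> x h z =
     ((1 - \<beta>) * (1 - L * h / 4) * (norm (x - z))\<^sup>2 + \<beta> * inner (x - z) (h *\<^sub>R g z))
     / (h\<^sup>2 * (norm (g x - \<beta> *\<^sub>R (g x - g z)))\<^sup>2)"

definition proj_interval :: "real \<Rightarrow> real \<Rightarrow> real \<Rightarrow> real" where
  "proj_interval a b t = max a (min b t)"

end

theory Submission
  imports Defs
begin

text \<open>
  Write \<open>d = \<nabla>f(x\<^sup>k)\<close> and \<open>e = \<nabla>f(z\<^sup>k) - d\<close>. Since \<open>z\<^sup>k - x\<^sup>k = -h\<^sub>k d\<close>, the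
  stopping rule \<open>r\<^sub>k(h\<^sub>k) \<le> \<nu>\<close> says exactly \<open>\<parallel>e\<parallel> \<le> \<nu>\<parallel>d\<parallel>\<close>, and after cancelling
  \<open>h\<^sub>k\<^sup>2\<close>
  \<open>\<alpha>\<^sub>k = ((1-\<beta>)(1-L h\<^sub>k/4)\<parallel>d\<parallel>\<^sup>2 + \<beta>(\<parallel>d\<parallel>\<^sup>2 + \<langle>d,e\<rangle>)) / \<parallel>d+\<beta>e\<parallel>\<^sup>2\<close>.
  By Cauchy-Schwarz and \<open>h\<^sub>k \<le> hhi\<close> the numerator is at least
  \<open>((1-\<beta>)(1-L hhi/4) + \<beta>(1-\<nu>))\<parallel>d\<parallel>\<^sup>2\<close>, while the denominator is at most
  \<open>(1+\<beta>\<nu>)\<^sup>2\<parallel>d\<parallel>\<^sup>2 \<le> (2+2\<beta>\<^sup>2\<nu>\<^sup>2)\<parallel>d\<parallel>\<^sup>2\<close>. That \<open>h\<^sub>k\<close> exists and lies in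
  \<open>(0, hhi]\<close> follows because \<open>r\<^sub>k(\<gamma>) \<le> L\<gamma>\<close> and the trial steps shrink at least
  geometrically while \<open>r\<^sub>k > \<nu>\<close>.
\<close>

lemma ratio_le_lipschitz:
  fixes g :: "'a::real_normed_vector \<Rightarrow> 'a"
  assumes lip: "L-lipschitz_on UNIV g" and t: "0 < t"
  shows "ratio g x t \<le> L * t"
proof (cases "zpt g x t = x")
  case True
  then show ?thesis using t lipschitz_on_nonneg[OF lip] by (simp add: ratio_def)
next
  case False
  have "norm (g (zpt g x t) - g x) \<le> L * norm (zpt g x t - x)"
    using lipschitz_onD[OF lip, of "zpt g x t" x] by (simp add: dist_norm)
  then have "t * norm (g (zpt g x t) - g x) \<le> t * (L * norm (zpt g x t - x))"
    using t by (simp add: mult_left_mono)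
  then show ?thesis using False t by (simp add: ratio_def divide_le_eq mult_ac)
qed

text \<open>Positivity of the ratio is needed: for \<open>r = 0\<close> the junk value \<open>1 / 0 = 0\<close> would make
  the next trial step \<open>0\<close>.\<close>

lemma bt_Suc_bounds:
  assumes b: "0 < bt g \<theta> x \<gamma> l" and r: "0 < ratio g x (bt g \<theta> x \<gamma> l)"
    and \<theta>: "0 < \<theta>" "\<theta> < 1"
  shows "0 < bt g \<theta> x \<gamma> (Suc l)" and "bt g \<theta> x \<gamma> (Suc l) \<le> \<theta> * bt g \<theta> x \<gamma> l"
proof -
  let ?m = "min 1 (1 / ratio g x (bt g \<theta> x \<gamma> l))"
  have m: "0 < ?m" "?m \<le> 1" using r by auto
  show "0 < bt g \<theta> x \<gamma> (Suc l)" using b \<theta> m by simp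
  show "bt g \<theta> x \<gamma> (Suc l) \<le> \<theta> * bt g \<theta> x \<gamma> l"
    using mult_left_mono[OF m(2), of "\<theta> * bt g \<theta> x \<gamma> l"] b \<theta> by (simp add: mult_ac)
qed

lemma bt_bounds_while_backtracking:
  assumes \<gamma>: "0 < \<gamma>" and \<nu>: "0 \<le> \<nu>" and \<theta>: "0 < \<theta>" "\<theta> < 1"
    and rejected: "\<And>j. j < l \<Longrightarrow> \<nu> < ratio g x (bt g \<theta> x \<gamma> j)"
  shows "0 < bt g \<theta> x \<gamma> l \<and> bt g \<theta> x \<gamma> l \<le> \<theta> ^ l * \<gamma>"
  using rejected
proof (induction l)
  case 0
  then show ?case using \<gamma> by simp
next
  case (Suc l)
  then have IH: "0 < bt g \<theta> x \<gamma> l" "bt g \<theta> x \<gamma> l \<le> \<theta> ^ l * \<gamma>" by simp_all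
  have "0 < ratio g x (bt g \<theta> x \<gamma> l)" using Suc.prems[of l] \<nu> by simp
  note next_step = bt_Suc_bounds[OF IH(1) this \<theta>]
  have "\<theta> * bt g \<theta> x \<gamma> l \<le> \<theta> ^ Suc l * \<gamma>" using IH(2) \<theta> by simp
  then show ?case using next_step by simp
qed

lemma backtracking_terminates:
  fixes g :: "'a::real_normed_vector \<Rightarrow> 'a"
  assumes lip: "L-lipschitz_on UNIV g" and \<gamma>: "0 < \<gamma>" and \<nu>: "0 < \<nu>"
    and \<theta>: "0 < \<theta>" "\<theta> < 1"
  shows "\<exists>l. ratio g x (bt g \<theta> x \<gamma> l) \<le> \<nu>"
proof (rule ccontr)
  assume "\<nexists>l. ratio g x (bt g \<theta> x \<gamma> l) \<le> \<nu>"
  then have rejected: "\<And>j. \<nu> < ratio g x (bt g \<theta> x \<gamma> j)" by (meson not_le)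
  have L: "0 \<le> L" using lipschitz_on_nonneg[OF lip] .
  obtain l where l: "\<theta> ^ l < \<nu> / ((L + 1) * \<gamma>)"
    using real_arch_pow_inv[of "\<nu> / ((L + 1) * \<gamma>)" \<theta>] \<nu> \<gamma> L \<theta> by auto
  have b: "0 < bt g \<theta> x \<gamma> l" "bt g \<theta> x \<gamma> l \<le> \<theta> ^ l * \<gamma>"
    using bt_bounds_while_backtracking[OF \<gamma> less_imp_le[OF \<nu>] \<theta> rejected] by auto
  have "ratio g x (bt g \<theta> x \<gamma> l) \<le> L * bt g \<theta> x \<gamma> l"
    using ratio_le_lipschitz[OF lip b(1)] .
  also have "\<dots> \<le> (L + 1) * (\<theta> ^ l * \<gamma>)"
    using b L by (intro mult_mono) auto
  also have "\<dots> < \<nu>"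
    using l L \<gamma> by (simp add: pos_less_divide_eq mult_ac)
  finally show False using rejected[of l] by simp
qed

lemma step_h_bounds:
  fixes g :: "'a::real_normed_vector \<Rightarrow> 'a"
  assumes lip: "L-lipschitz_on UNIV g" and \<gamma>: "0 < \<gamma>" and \<nu>: "0 < \<nu>"
    and \<theta>: "0 < \<theta>" "\<theta> < 1"
  shows "0 < step_h g \<nu> \<theta> x \<gamma>" and "step_h g \<nu> \<theta> x \<gamma> \<le> \<gamma>"
    and "ratio g x (step_h g \<nu> \<theta> x \<gamma>) \<le> \<nu>"
proof -
  define m where "m = (LEAST l. ratio g x (bt g \<theta> x \<gamma> l) \<le> \<nu>)"
  have h: "step_h g \<nu> \<theta> x \<gamma> = bt g \<theta> x \<gamma> m" by (simp add: step_h_def m_def)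
  show "ratio g x (step_h g \<nu> \<theta> x \<gamma>) \<le> \<nu>"
    unfolding h m_def by (rule LeastI_ex[OF backtracking_terminates[OF assms]])
  have "\<nu> < ratio g x (bt g \<theta> x \<gamma> j)" if "j < m" for j
    using not_less_Least[OF that[unfolded m_def]] by simp
  then have b: "0 < bt g \<theta> x \<gamma> m" "bt g \<theta> x \<gamma> m \<le> \<theta> ^ m * \<gamma>"
    using bt_bounds_while_backtracking[OF \<gamma> less_imp_le[OF \<nu>] \<theta>] by auto
  have "\<theta> ^ m * \<gamma> \<le> \<gamma>" using \<theta> \<gamma> by (simp add: mult_left_le_one_le power_le_one)
  then show "0 < step_h g \<nu> \<theta> x \<gamma>" "step_h g \<nu> \<theta> x \<gamma> \<le> \<gamma>" using b h by simp_all
qed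

lemma proj_interval_bounds:
  assumes "a \<le> b"
  shows "a \<le> proj_interval a b t" and "proj_interval a b t \<le> b"
  using assms by (simp_all add: proj_interval_def)

lemma gradient_change_le_ratio:
  assumes h: "0 < h" and r: "ratio g x h \<le> \<nu>" and d: "g x \<noteq> 0"
  shows "norm (g (zpt g x h) - g x) \<le> \<nu> * norm (g x)"
proof -
  have "norm (zpt g x h - x) = h * norm (g x)" using h by (simp add: zpt_def)
  then have "ratio g x h = norm (g (zpt g x h) - g x) / norm (g x)"
    using h by (simp add: ratio_def)
  then show ?thesis using r d by (simp add: divide_le_eq)
qed

lemma alpha_zpt_eq:
  fixes g :: "'a::real_inner \<Rightarrow> 'a" and x :: 'a and h :: real
  assumes h: "h \<noteq> 0"
  defines "d \<equiv> g x" and "e \<equiv> g (zpt g x h) - g x"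
  shows "alpha g L \<beta> x h (zpt g x h) =
    ((1 - \<beta>) * (1 - L * h / 4) * (norm d)\<^sup>2 + \<beta> * ((norm d)\<^sup>2 + inner d e))
      / (norm (d + \<beta> *\<^sub>R e))\<^sup>2"
proof -
  have xz: "x - zpt g x h = h *\<^sub>R d" by (simp add: zpt_def d_def)
  have gz: "g (zpt g x h) = d + e" by (simp add: d_def e_def)
  have den: "g x - \<beta> *\<^sub>R (g x - g (zpt g x h)) = d + \<beta> *\<^sub>R e"
    by (simp add: d_def e_def algebra_simps)
  have norm_xz: "(norm (x - zpt g x h))\<^sup>2 = h\<^sup>2 * (norm d)\<^sup>2"
    unfolding xz by (simp add: power_mult_distrib)
  have inner_xz: "inner (x - zpt g x h) (h *\<^sub>R g (zpt g x h)) = h\<^sup>2 * ((norm d)\<^sup>2 + inner d e)"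
    unfolding xz gz by (simp add: inner_add_right dot_square_norm power2_eq_square algebra_simps)
  have num: "(1 - \<beta>) * (1 - L * h / 4) * (norm (x - zpt g x h))\<^sup>2
        + \<beta> * inner (x - zpt g x h) (h *\<^sub>R g (zpt g x h))
      = h\<^sup>2 * ((1 - \<beta>) * (1 - L * h / 4) * (norm d)\<^sup>2 + \<beta> * ((norm d)\<^sup>2 + inner d e))"
    unfolding norm_xz inner_xz by (simp add: algebra_simps)
  show ?thesis using h unfolding alpha_def num den by simp
qed

lemma quotient_lower_bound:
  fixes d e :: "'a::real_inner"
  assumes d: "d \<noteq> 0" and e: "norm e \<le> \<nu> * norm d"
    and \<beta>: "0 \<le> \<beta>" "\<beta> \<le> 1" and \<nu>: "0 \<le> \<nu>" "\<nu> < 1" and c: "0 \<le> c0" "c0 \<le> c"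
  shows "((1 - \<beta>) * c0 + \<beta> * (1 - \<nu>)) / (2 + 2 * \<beta>\<^sup>2 * \<nu>\<^sup>2)
    \<le> ((1 - \<beta>) * c * (norm d)\<^sup>2 + \<beta> * ((norm d)\<^sup>2 + inner d e)) / (norm (d + \<beta> *\<^sub>R e))\<^sup>2"
proof -
  define n where "n = (norm d)\<^sup>2"
  define N where "N = (1 - \<beta>) * c0 + \<beta> * (1 - \<nu>)"
  define C where "C = 2 + 2 * \<beta>\<^sup>2 * \<nu>\<^sup>2"
  have n: "0 < n" using d by (simp add: n_def)
  have N: "0 \<le> N" using \<beta> \<nu> c by (simp add: N_def)
  have C: "0 < C" by (simp add: C_def add_pos_nonneg)
  have "inner d e \<ge> - (\<nu> * n)"
    using Cauchy_Schwarz_ineq2[of d e] mult_left_mono[OF e norm_ge_zero[of d]]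
    by (simp add: n_def power2_eq_square mult_ac)
  then have "\<beta> * ((1 - \<nu>) * n) \<le> \<beta> * (n + inner d e)"
    using \<beta> by (intro mult_left_mono) (auto simp: algebra_simps)
  moreover have "(1 - \<beta>) * c0 * n \<le> (1 - \<beta>) * c * n"
    using \<beta> c n by (intro mult_right_mono mult_left_mono) auto
  ultimately have num: "n * N \<le> (1 - \<beta>) * c * n + \<beta> * (n + inner d e)"
    by (simp add: N_def algebra_simps)
  have be: "norm (\<beta> *\<^sub>R e) \<le> \<beta> * \<nu> * norm d"
    using e \<beta> by (simp add: mult_left_mono mult.assoc)
  have "\<beta> * \<nu> < 1" using \<beta> \<nu> by (metis le_less_trans mult_left_le_one_le)
  then have "0 < (1 - \<beta> * \<nu>) * norm d" using d by simp
  also have "\<dots> \<le> norm (d + \<beta> *\<^sub>R e)"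
    using norm_diff_ineq[of d "\<beta> *\<^sub>R e"] be by (simp add: algebra_simps)
  finally have den_pos: "0 < (norm (d + \<beta> *\<^sub>R e))\<^sup>2" by simp
  have "norm (d + \<beta> *\<^sub>R e) \<le> (1 + \<beta> * \<nu>) * norm d"
    using norm_triangle_ineq[of d "\<beta> *\<^sub>R e"] be by (simp add: algebra_simps)
  then have "(norm (d + \<beta> *\<^sub>R e))\<^sup>2 \<le> ((1 + \<beta> * \<nu>) * norm d)\<^sup>2"
    by (rule power_mono) simp
  also have "\<dots> = (1 + \<beta> * \<nu>)\<^sup>2 * n" by (simp add: n_def power_mult_distrib)
  also have "\<dots> \<le> C * n"
    using n sum_squares_ge_zero[of 0 "1 - \<beta> * \<nu>"]
    by (intro mult_right_mono) (auto simp: C_def power2_eq_square algebra_simps)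
  finally have den: "(norm (d + \<beta> *\<^sub>R e))\<^sup>2 \<le> C * n" .
  have "N / C = n * N / (C * n)" using n by simp
  also have "\<dots> \<le> n * N / (norm (d + \<beta> *\<^sub>R e))\<^sup>2"
    using den den_pos n N C by (intro divide_left_mono) auto
  also have "\<dots> \<le> ((1 - \<beta>) * c * n + \<beta> * (n + inner d e)) / (norm (d + \<beta> *\<^sub>R e))\<^sup>2"
    using num den_pos by (intro divide_right_mono) auto
  finally show ?thesis by (simp add: N_def C_def n_def)
qed

theorem lemma7:
  fixes f :: "real ^ 'n \<Rightarrow> real" and g :: "real ^ 'n \<Rightarrow> real ^ 'n"
    and L \<mu> \<nu> hlo hhi \<beta> \<theta> \<tau> \<eta> :: real
    and xs :: "nat \<Rightarrow> real ^ 'n" and \<gamma>0 :: "nat \<Rightarrow> real" and k :: nat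
  assumes grad: "\<And>x. GDERIV f x :> g x"
    and lip: "L-lipschitz_on UNIV g" and L_pos: "0 < L"
    and mu_nu: "0 < \<mu>" "\<mu> < \<nu>" "\<nu> < 1"
    and h_bounds: "0 < hlo" "hlo < 1" "1 \<le> \<gamma>0 0" "\<gamma>0 0 \<le> hhi" "hhi < 4 / L"
    and beta: "0 \<le> \<beta>" "\<beta> \<le> 1"
    and theta: "0 < \<theta>" "\<theta> < 1"
    and tau: "1 < \<tau>"
    and eta: "0 < \<eta>" "\<eta> < 2"
    and x_step: "\<And>j. j < k \<Longrightarrow>
       xs (Suc j) = xs j -
         (\<eta> * alpha g L \<beta> (xs j) (step_h g \<nu> \<theta> (xs j) (\<gamma>0 j))
                (zpt g (xs j) (step_h g \<nu> \<theta> (xs j) (\<gamma>0 j)))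
            * step_h g \<nu> \<theta> (xs j) (\<gamma>0 j))
         *\<^sub>R (g (xs j) - \<beta> *\<^sub>R (g (xs j) - g (zpt g (xs j) (step_h g \<nu> \<theta> (xs j) (\<gamma>0 j)))))"
    and gamma_step: "\<And>j. j < k \<Longrightarrow>
       \<gamma>0 (Suc j) =
         (if ratio g (xs j) (step_h g \<nu> \<theta> (xs j) (\<gamma>0 j)) \<le> \<mu>
          then proj_interval hlo hhi (\<tau> * step_h g \<nu> \<theta> (xs j) (\<gamma>0 j))
          else proj_interval hlo hhi (step_h g \<nu> \<theta> (xs j) (\<gamma>0 j)))"
    and running: "\<And>j. j \<le> k \<Longrightarrow> g (xs j) \<noteq> 0"
  shows "alpha g L \<beta> (xs k) (step_h g \<nu> \<theta> (xs k) (\<gamma>0 k))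
            (zpt g (xs k) (step_h g \<nu> \<theta> (xs k) (\<gamma>0 k)))
         \<ge> ((1 - \<beta>) * (1 - L * hhi / 4) + \<beta> * (1 - \<nu>)) / (2 + 2 * \<beta>\<^sup>2 * \<nu>\<^sup>2)"
proof -
  have \<gamma>k: "0 < \<gamma>0 k \<and> \<gamma>0 k \<le> hhi"
  proof (cases k)
    case (Suc j)
    have "hlo \<le> \<gamma>0 k \<and> \<gamma>0 k \<le> hhi"
      using gamma_step[of j] Suc h_bounds proj_interval_bounds[of hlo hhi] by simp
    then show ?thesis using h_bounds by auto
  qed (use h_bounds in auto)
  define h where "h = step_h g \<nu> \<theta> (xs k) (\<gamma>0 k)"
  have h: "0 < h" "h \<le> hhi" "ratio g (xs k) h \<le> \<nu>"
    using step_h_bounds[OF lip conjunct1[OF \<gamma>k], of \<nu> \<theta> "xs k"] \<gamma>k mu_nu theta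
    unfolding h_def by auto
  have "L * hhi < 4" using h_bounds(5) L_pos by (simp add: field_simps)
  moreover have "L * h \<le> L * hhi" using h L_pos by simp
  ultimately have "0 \<le> 1 - L * hhi / 4" "1 - L * hhi / 4 \<le> 1 - L * h / 4" by simp_all
  from quotient_lower_bound[OF running[OF order_refl]
      gradient_change_le_ratio[OF h(1) h(3) running[OF order_refl]] beta _ _ this]
  show ?thesis
    using mu_nu h(1) by (simp add: alpha_zpt_eq h_def[symmetric])
qed

end
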